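(* Let $M\in\mathrm{Mat}(2,\mathbb{Z})$ with $D=\det(M)$, and let $n=p_1^{r_1}p_2^{r_2}\cdots p_s^{r_s}$ be the prime decomposition of $n$. If $n$ is not divisible by $4$, then $M$ is reversible mod $n$ if and only if, for each $1\le i\le s$, $D\equiv1$ or $M^2\equiv\mathbb{1}\pmod{p_i^{r_i}}$. If $n=2^{r_1}p_2^{r_2}\cdots p_s^{r_s}$ with $r_1\ge2$ (and $p_2,\dots,p_s$ odd), then $M$ is reversible mod $n$ if and only if $M$ is reversible mod $2^{r_1}$ and, for all $i>1$, $D\equiv1$ or $M^2\equiv\mathbb{1}\pmod{p_i^{r_i}}$.
   Context: $M$ is reversible mod $k$ if $\det M$ is a unit mod $k$ and there exists $R\in\mathrm{GL}(2,\mathbb{Z}/k\mathbb{Z})$ with $RMR^{-1}\equiv M^{-1}\pmod k$. *)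

theory Defs
  imports "HOL-Analysis.Analysis" "HOL-Number_Theory.Number_Theory"
begin

definition matcong :: "int^2^2 \<Rightarrow> int^2^2 \<Rightarrow> int \<Rightarrow> bool" where
  "matcong A B k \<longleftrightarrow> (\<forall>i j. [A $ i $ j = B $ i $ j] (mod k))"

text \<open>An integer matrix represents an element of GL(2, Z/kZ), with inverse
  represented by Ainv, if A Ainv = Ainv A = 1 mod k.\<close>

definition inv_mod :: "int^2^2 \<Rightarrow> int^2^2 \<Rightarrow> int \<Rightarrow> bool" where
  "inv_mod A Ainv k \<longleftrightarrow> matcong (A ** Ainv) (mat 1) k \<and> matcong (Ainv ** A) (mat 1) k"

definition reversible_mod :: "int^2^2 \<Rightarrow> int \<Rightarrow> bool" where
  "reversible_mod M k \<longleftrightarrow> coprime (det M) k \<and>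
     (\<exists>R Rinv Minv. inv_mod R Rinv k \<and> inv_mod M Minv k \<and>
        matcong (R ** M ** Rinv) Minv k)"

end

theory Submission
  imports Defs
begin

text \<open>Reversibility of M mod k amounts to the existence of R, invertible mod k, with
  M R M \<equiv> R. Modulo a prime power p^r with p odd, this forces det M \<equiv> \<plusminus>1; in the case
  det M \<equiv> -1 the identity det R \<cdot> tr M \<cdot> (det M - 1) \<equiv> 0 gives tr M \<equiv> 0, and then
  M^2 \<equiv> 1 by Cayley-Hamilton. Conversely M^2 \<equiv> 1 is reversed by R = 1, and if det M \<equiv> 1
  then M R M = R + (a linear form in the entries of R) \<cdot> M for every traceless R, so it
  suffices to find a root of a linear form mod p^r at which the quadratic form
  -det R = x^2 + yz is a unit. Finally, reversibility is local: it passes to divisors of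
  the modulus and glues along coprime factorisations by the Chinese remainder theorem.\<close>

lemma matrix_mult_2_nth:
  "((A::int^2^2) ** B) $ i $ j = A$i$1 * B$1$j + A$i$2 * B$2$j"
  by (simp add: matrix_matrix_mult_def sum_2)

lemma matcong_2_iff:
  "matcong A B k \<longleftrightarrow>
     [A$1$1 = B$1$1] (mod k) \<and> [A$1$2 = B$1$2] (mod k) \<and>
     [A$2$1 = B$2$1] (mod k) \<and> [A$2$2 = B$2$2] (mod k)"
  by (simp add: matcong_def forall_2)

lemma mat_1_2_nth [simp]:
  "(mat 1 :: int^2^2)$1$1 = 1" "(mat 1 :: int^2^2)$1$2 = 0"
  "(mat 1 :: int^2^2)$2$1 = 0" "(mat 1 :: int^2^2)$2$2 = 1"
  by (simp_all add: mat_def)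

lemma matcong_refl [simp]: "matcong A A k"
  by (simp add: matcong_def)

lemma matcong_sym: "matcong A B k \<Longrightarrow> matcong B A k"
  by (simp add: matcong_def cong_sym)

lemma matcong_trans: "matcong A B k \<Longrightarrow> matcong B C k \<Longrightarrow> matcong A C k"
  unfolding matcong_def by (meson cong_trans)

lemma matcong_mult:
  "matcong (A::int^2^2) A' k \<Longrightarrow> matcong B B' k \<Longrightarrow> matcong (A ** B) (A' ** B') k"
  unfolding matcong_def matrix_mult_2_nth by (meson cong_add cong_mult)

lemma matcong_det: "matcong (A::int^2^2) B k \<Longrightarrow> [det A = det B] (mod k)"
  unfolding matcong_2_iff det_2 by (meson cong_diff cong_mult)

lemma matcong_dvd_modulus: "matcong A B k \<Longrightarrow> d dvd k \<Longrightarrow> matcong A B d"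
  unfolding matcong_def using cong_dvd_modulus by blast

lemma matcong_mult_modulus:
  "matcong A B a \<Longrightarrow> matcong A B b \<Longrightarrow> coprime a b \<Longrightarrow> matcong A B (a * b)"
  unfolding matcong_def using coprime_cong_mult by blast

lemma matcong_chinese_remainder:
  assumes "coprime a b"
  obtains X :: "int^2^2" where "matcong X A a" "matcong X B b"
proof
  define X :: "int^2^2" where
    "X = (\<chi> i j. SOME x. [x = A$i$j] (mod a) \<and> [x = B$i$j] (mod b))"
  have "[X$i$j = A$i$j] (mod a) \<and> [X$i$j = B$i$j] (mod b)" for i j
    unfolding X_def using someI_ex[OF binary_chinese_remainder_int[OF assms]] by simp
  then show "matcong X A a" "matcong X B b"
    unfolding matcong_def by auto
qed

lemma coprime_if_cong_mult_1: "[a * b = 1] (mod k) \<Longrightarrow> coprime (a::int) k"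
  by (metis cong_solve_coprime_int coprime_iff_invertible_int mult.assoc)

lemma inv_mod_exists:
  assumes "coprime (det (A::int^2^2)) k"
  obtains Ainv where "inv_mod A Ainv k"
proof -
  obtain u where u: "[det A * u = 1] (mod k)"
    using cong_solve_coprime_int[OF assms] by blast
  define B :: "int^2^2" where
    "B = (\<chi> i j. if i = 1 then (if j = 1 then u * A$2$2 else - u * A$1$2)
                  else (if j = 1 then - u * A$2$1 else u * A$1$1))"
  have "B$1$1 = u * A$2$2" "B$1$2 = - u * A$1$2" "B$2$1 = - u * A$2$1" "B$2$2 = u * A$1$1"
    by (simp_all add: B_def)
  then have "(A**B)$1$1 = det A * u" "(A**B)$1$2 = 0" "(A**B)$2$1 = 0" "(A**B)$2$2 = det A * u"
     "(B**A)$1$1 = det A * u" "(B**A)$1$2 = 0" "(B**A)$2$1 = 0" "(B**A)$2$2 = det A * u"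
    by (simp_all add: matrix_mult_2_nth det_2 algebra_simps)
  then have "inv_mod A B k"
    unfolding inv_mod_def matcong_2_iff using u by simp
  then show ?thesis by (rule that)
qed

lemma inv_mod_coprime_det:
  assumes "inv_mod A Ainv k"
  shows "coprime (det (A::int^2^2)) k"
proof -
  have "[det (A ** Ainv) = det (mat 1 :: int^2^2)] (mod k)"
    using assms unfolding inv_mod_def by (blast intro: matcong_det)
  then show ?thesis
    by (simp add: det_mul coprime_if_cong_mult_1)
qed

lemma inv_mod_sym: "inv_mod A Ainv k \<Longrightarrow> inv_mod Ainv A k"
  by (simp add: inv_mod_def)

lemma inv_mod_cancel_left:
  assumes "inv_mod (A::int^2^2) Ainv k" and "matcong (A ** X) Y k"
  shows "matcong X (Ainv ** Y) k"
proof -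
  have "matcong X ((Ainv ** A) ** X) k"
    using assms(1) unfolding inv_mod_def
    by (metis matcong_mult matcong_refl matcong_sym matrix_mul_lid)
  moreover have "matcong ((Ainv ** A) ** X) (Ainv ** Y) k"
    using matcong_mult[OF matcong_refl assms(2), of Ainv] by (simp add: matrix_mul_assoc)
  ultimately show ?thesis by (rule matcong_trans)
qed

lemma inv_mod_cancel_right:
  assumes "inv_mod (A::int^2^2) Ainv k" and "matcong (X ** A) Y k"
  shows "matcong X (Y ** Ainv) k"
proof -
  have "matcong X (X ** (A ** Ainv)) k"
    using assms(1) unfolding inv_mod_def
    by (metis matcong_mult matcong_refl matcong_sym matrix_mul_rid)
  moreover have "matcong (X ** (A ** Ainv)) (Y ** Ainv) k"
    using matcong_mult[OF assms(2) matcong_refl, of Ainv] by (simp add: matrix_mul_assoc)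
  ultimately show ?thesis by (rule matcong_trans)
qed

text \<open>R M R^-1 \<equiv> M^-1 is equivalent to M R M \<equiv> R, which does not mention inverses.\<close>

lemma reversible_mod_iff:
  "reversible_mod M k \<longleftrightarrow>
     coprime (det M) k \<and> (\<exists>R. coprime (det R) k \<and> matcong (M ** R ** M) R k)"
proof
  assume "reversible_mod M k"
  then obtain R Rinv Minv where M: "coprime (det M) k" and R: "inv_mod R Rinv k"
    and Minv: "inv_mod M Minv k" and conj: "matcong (R ** M ** Rinv) Minv k"
    unfolding reversible_mod_def by blast
  have "matcong (R ** M) (Minv ** R) k"
    using inv_mod_cancel_right[OF inv_mod_sym[OF R] conj] .
  then have "matcong R (M ** (R ** M)) k"
    by (rule inv_mod_cancel_left[OF inv_mod_sym[OF Minv], OF matcong_sym])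
  then show "coprime (det M) k \<and> (\<exists>R. coprime (det R) k \<and> matcong (M ** R ** M) R k)"
    using M inv_mod_coprime_det[OF R] by (metis matcong_sym matrix_mul_assoc)
next
  assume "coprime (det M) k \<and> (\<exists>R. coprime (det R) k \<and> matcong (M ** R ** M) R k)"
  then obtain R where M: "coprime (det M) k" and "coprime (det R) k"
    and MRM: "matcong (M ** (R ** M)) R k"
    by (auto simp: matrix_mul_assoc)
  then obtain Rinv where R: "inv_mod R Rinv k" by (blast elim: inv_mod_exists)
  obtain Minv where Minv: "inv_mod M Minv k" using M by (blast elim: inv_mod_exists)
  have "matcong (Minv ** R) (R ** M) k"
    using matcong_sym[OF inv_mod_cancel_left[OF Minv MRM]] .
  then have "matcong Minv (R ** M ** Rinv) k"
    by (rule inv_mod_cancel_right[OF R])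
  then show "reversible_mod M k"
    unfolding reversible_mod_def using M R Minv matcong_sym by blast
qed

lemma reversible_mod_dvd_modulus:
  "reversible_mod M k \<Longrightarrow> d dvd k \<Longrightarrow> reversible_mod M d"
  unfolding reversible_mod_iff using coprime_divisors matcong_dvd_modulus by (meson dvd_refl)

lemma reversible_mod_mult_modulus:
  assumes "reversible_mod M a" "reversible_mod M b" "coprime a b"
  shows "reversible_mod M (a * b)"
proof -
  obtain R1 where M1: "coprime (det M) a" and R1: "coprime (det R1) a"
    and MRM1: "matcong (M ** R1 ** M) R1 a"
    using assms(1) unfolding reversible_mod_iff by blast
  obtain R2 where M2: "coprime (det M) b" and R2: "coprime (det R2) b"
    and MRM2: "matcong (M ** R2 ** M) R2 b"
    using assms(2) unfolding reversible_mod_iff by blast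
  obtain X where X1: "matcong X R1 a" and X2: "matcong X R2 b"
    using matcong_chinese_remainder[OF assms(3)] .
  have "matcong (M ** X ** M) X c"
    if "matcong X R c" "matcong (M ** R ** M) R c" for R c
    using that by (meson matcong_mult matcong_refl matcong_sym matcong_trans)
  then have "matcong (M ** X ** M) X (a * b)"
    using matcong_mult_modulus assms(3) MRM1 MRM2 X1 X2 by blast
  moreover have "coprime (det X) a" "coprime (det X) b"
    using cong_imp_coprime[OF cong_sym[OF matcong_det[OF X1]] R1]
      cong_imp_coprime[OF cong_sym[OF matcong_det[OF X2]] R2] .
  ultimately show ?thesis
    unfolding reversible_mod_iff using M1 M2 by auto
qed

lemma coprime_mult_closed_from_prime_powers:
  fixes P :: "nat \<Rightarrow> bool"
  assumes "P 1" and mult: "\<And>a b. coprime a b \<Longrightarrow> P a \<Longrightarrow> P b \<Longrightarrow> P (a * b)"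
    and "n > 0" and local: "\<forall>p\<in>prime_factors n. P (p ^ multiplicity p n)"
  shows "P n"
proof -
  have "P (\<Prod>p\<in>S. p ^ multiplicity p n)" if "finite S" "S \<subseteq> prime_factors n" for S
    using that
  proof (induction S rule: finite_induct)
    case (insert p S)
    have "coprime (p ^ multiplicity p n) (\<Prod>q\<in>S. q ^ multiplicity q n)"
    proof (rule prod_coprime_right)
      fix q assume "q \<in> S"
      then have "prime p" "prime q" "p \<noteq> q"
        using insert by auto
      then show "coprime (p ^ multiplicity p n) (q ^ multiplicity q n)"
        by (simp add: primes_coprime)
    qed
    then show ?case
      using insert local by (auto intro: mult)
  qed (simp only: prod.empty \<open>P 1\<close>)
  then show ?thesis
    using prime_factorization_nat[OF \<open>n > 0\<close>] by (metis finite_set_mset order_refl)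
qed

lemma reversible_mod_iff_prime_powers:
  assumes "n > 0"
  shows "reversible_mod M (int n) \<longleftrightarrow>
           (\<forall>p\<in>prime_factors n. reversible_mod M (int (p ^ multiplicity p n)))"
proof
  show "reversible_mod M (int n) \<Longrightarrow> \<forall>p\<in>prime_factors n. reversible_mod M (int (p ^ multiplicity p n))"
    using reversible_mod_dvd_modulus multiplicity_dvd by (metis int_dvd_int_iff)
  have "reversible_mod M 1"
    unfolding reversible_mod_iff by (auto intro: exI[of _ "mat 1"] simp: matcong_def)
  then show "\<forall>p\<in>prime_factors n. reversible_mod M (int (p ^ multiplicity p n)) \<Longrightarrow> reversible_mod M (int n)"
    using coprime_mult_closed_from_prime_powers[of "\<lambda>m. reversible_mod M (int m)"]
      reversible_mod_mult_modulus assms by (simp add: coprime_int_iff)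
qed

lemma reversible_mod_if_square_cong_1:
  assumes "matcong ((M::int^2^2) ** M) (mat 1) k"
  shows "reversible_mod M k"
proof -
  have "[det M * det M = 1] (mod k)"
    using matcong_det[OF assms] by (simp add: det_mul)
  then show ?thesis
    unfolding reversible_mod_iff using assms coprime_if_cong_mult_1
    by (metis det_I coprime_1_left matrix_mul_rid)
qed

lemma linear_form_root_with_unit_quadratic_value:
  fixes p :: int
  assumes p: "prime p"
  shows "\<exists>x y z. p^r dvd (a*x + c*y + b*z) \<and> \<not> p dvd (x^2 + y*z)"
proof (induction r arbitrary: a b c)
  case 0
  have "\<not> p dvd (1^2 + 0*0)"
    using prime_gt_1_int[OF p] by simp
  then show ?case
    by (intro exI[of _ 1] exI[of _ 0]) simp
next
  case (Suc r)
  have p_not_unit: "\<not> p dvd 1"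
    using p not_prime_unit by blast
  consider "\<not> p dvd c" | "\<not> p dvd b" | "\<not> p dvd a" "p dvd b" "p dvd c"
    | "p dvd a" "p dvd b" "p dvd c"
    by blast
  then show ?case
  proof cases
    case 1
    then have "\<not> p dvd (c^2 + (-a)*0)"
      using p prime_dvd_power by auto
    moreover have "p^Suc r dvd (a*c + c*(-a) + b*0)" by simp
    ultimately show ?thesis by blast
  next
    case 2
    then have "\<not> p dvd (b^2 + 0*(-a))"
      using p prime_dvd_power by auto
    moreover have "p^Suc r dvd (a*b + c*0 + b*(-a))" by simp
    ultimately show ?thesis by blast
  next
    case 3
    then have "coprime (p^Suc r) a"
      using prime_imp_coprime[OF p] by simp
    then obtain u where u: "[a * u = 1] (mod p^Suc r)"
      using cong_solve_coprime_int[of a "p^Suc r"] by (auto simp: coprime_commute)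
    define x where "x = (b - c) * u"
    have "[a * x = b - c] (mod p^Suc r)"
      using cong_scalar_right[OF u, of "b - c"] by (simp add: x_def ac_simps)
    moreover have "a * x + c * 1 + b * (-1) = a * x - (b - c)"
      by simp
    ultimately have "p^Suc r dvd (a*x + c*1 + b*(-1))"
      by (simp only: cong_iff_dvd_diff)
    moreover have "p dvd x^2"
      unfolding x_def using 3 by (simp add: power2_eq_square)
    then have "\<not> p dvd (x^2 + 1*(-1))"
      using p_not_unit dvd_diff[of p "x^2" "x^2 + 1*(-1)"] by auto
    ultimately show ?thesis by blast
  next
    case 4
    then obtain a' b' c' where abc: "a = p * a'" "b = p * b'" "c = p * c'"
      by (meson dvdE)
    obtain x y z where xyz: "p^r dvd (a'*x + c'*y + b'*z)" "\<not> p dvd (x^2 + y*z)"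
      using Suc.IH by blast
    have "a*x + c*y + b*z = p * (a'*x + c'*y + b'*z)"
      by (simp add: abc algebra_simps)
    then have "p^Suc r dvd (a*x + c*y + b*z)"
      using xyz(1) by simp
    then show ?thesis
      using xyz(2) by blast
  qed
qed

lemma matrix_mult_traceless_sandwich:
  fixes M R :: "int^2^2"
  assumes "R$2$2 = - R$1$1"
  shows "(M ** R ** M)$i$j = det M * R$i$j +
     ((M$1$1 - M$2$2) * R$1$1 + M$2$1 * R$1$2 + M$1$2 * R$2$1) * M$i$j"
proof -
  have "i = 1 \<or> i = 2" "j = 1 \<or> j = 2" using exhaust_2 by auto
  then show ?thesis using assms by (auto simp: matrix_mult_2_nth det_2 algebra_simps)
qed

lemma reversible_mod_prime_power_if_det_cong_1:
  fixes p :: int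
  assumes p: "prime p" and D: "[det M = 1] (mod p^r)"
  shows "reversible_mod M (p^r)"
proof -
  obtain x y z where root: "p^r dvd ((M$1$1 - M$2$2)*x + M$2$1*y + M$1$2*z)"
    and unit: "\<not> p dvd (x^2 + y*z)"
    using linear_form_root_with_unit_quadratic_value[OF p] by blast
  define R :: "int^2^2" where
    "R = (\<chi> i j. if i = 1 then (if j = 1 then x else y) else (if j = 1 then z else -x))"
  have R: "R$1$1 = x" "R$1$2 = y" "R$2$1 = z" "R$2$2 = -x"
    by (simp_all add: R_def)
  have "det R = - (x^2 + y*z)"
    by (simp add: det_2 R power2_eq_square)
  moreover have "coprime p (x^2 + y*z)"
    using unit p prime_imp_coprime by blast
  ultimately have "coprime p (det R)"
    by (simp only: coprime_minus_right_iff)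
  then have "coprime (p^r) (det R)"
    by simp
  then have "coprime (det R) (p^r)"
    by (rule coprime_commute[THEN iffD1])
  moreover have "coprime (det M) (p^r)"
    using D coprime_if_cong_mult_1[of "det M" 1 "p^r"] by (simp only: mult_1_right)
  moreover have "matcong (M ** R ** M) R (p^r)"
    unfolding matcong_def
  proof (intro allI)
    fix i j
    have "[det M * R$i$j + ((M$1$1 - M$2$2) * x + M$2$1 * y + M$1$2 * z) * M$i$j
        = 1 * R$i$j + 0 * M$i$j] (mod p^r)"
      using D root by (intro cong_add cong_mult cong_refl) (simp_all add: cong_0_iff)
    then show "[(M ** R ** M)$i$j = R$i$j] (mod p^r)"
      using matrix_mult_traceless_sandwich[of R M i j] by (simp add: R)
  qed
  ultimately show ?thesis
    unfolding reversible_mod_iff by blast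
qed

lemma reversible_mod_det_square_cong_1:
  assumes "reversible_mod M k"
  shows "[det M * det M = 1] (mod k)"
proof -
  obtain R where R: "coprime (det R) k" and MRM: "matcong (M ** R ** M) R k"
    using assms unfolding reversible_mod_iff by blast
  have "[det R * (det M * det M) = det R * 1] (mod k)"
    using matcong_det[OF MRM] by (simp add: det_mul ac_simps)
  then show ?thesis
    using R cong_mult_lcancel by blast
qed

lemma cong_1_or_minus_1_if_square_cong_1:
  fixes p d :: int
  assumes p: "prime p" "p \<noteq> 2" and d: "[d * d = 1] (mod p^r)"
  shows "[d = 1] (mod p^r) \<or> [d = -1] (mod p^r)"
proof -
  have dvd: "p^r dvd (d - 1) * (d + 1)"
    using d by (simp add: cong_iff_dvd_diff algebra_simps)
  have "\<not> p dvd (d + 1) - (d - 1)"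
    using p(2) primes_dvd_imp_eq[OF p(1) two_is_prime] by auto
  then consider "\<not> p dvd d + 1" | "\<not> p dvd d - 1"
    using dvd_diff by blast
  then have "p^r dvd d - 1 \<or> p^r dvd d + 1"
  proof cases
    case 1
    then have "coprime (p^r) (d + 1)"
      using prime_imp_coprime[OF p(1)] by simp
    then show ?thesis
      using dvd coprime_dvd_mult_left_iff by blast
  next
    case 2
    then have "coprime (p^r) (d - 1)"
      using prime_imp_coprime[OF p(1)] by simp
    then show ?thesis
      using dvd coprime_dvd_mult_right_iff by blast
  qed
  then show ?thesis
    by (simp add: cong_iff_dvd_diff)
qed

lemma det_trace_sandwich_identity:
  fixes M R :: "int^2^2"
  shows "det R * (M$1$1 + M$2$2) * (det M - 1) =
    ((M ** R ** M)$1$1 - R$1$1) * (M$2$2 * R$2$2 + M$1$2 * R$2$1) +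
    ((M ** R ** M)$1$2 - R$1$2) * (- M$2$1 * R$2$2 - M$1$1 * R$2$1) +
    ((M ** R ** M)$2$1 - R$2$1) * (- M$2$2 * R$1$2 - M$1$2 * R$1$1) +
    ((M ** R ** M)$2$2 - R$2$2) * (M$2$1 * R$1$2 + M$1$1 * R$1$1)"
  by (simp add: matrix_mult_2_nth det_2 algebra_simps)

lemma square_cong_1_if_reversible_det_cong_minus_1:
  assumes q: "coprime q 2" and R: "coprime (det R) q"
    and MRM: "matcong ((M::int^2^2) ** R ** M) R q" and D: "[det M = -1] (mod q)"
  shows "matcong (M ** M) (mat 1) q"
proof -
  have D': "q dvd det M + 1" "[det M - 1 = -2] (mod q)"
    using D cong_diff[OF D cong_refl, of 1] by (simp_all add: cong_iff_dvd_diff)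
  have "q dvd (M ** R ** M)$1$1 - R$1$1" "q dvd (M ** R ** M)$1$2 - R$1$2"
    "q dvd (M ** R ** M)$2$1 - R$2$1" "q dvd (M ** R ** M)$2$2 - R$2$2"
    using MRM unfolding matcong_2_iff by (simp_all add: cong_iff_dvd_diff)
  then have "q dvd det R * (M$1$1 + M$2$2) * (det M - 1)"
    unfolding det_trace_sandwich_identity by (intro dvd_add dvd_mult2)
  moreover have "[det R * (M$1$1 + M$2$2) * (det M - 1) = det R * (M$1$1 + M$2$2) * (-2)] (mod q)"
    by (rule cong_mult[OF cong_refl D'(2)])
  ultimately have "q dvd det R * (M$1$1 + M$2$2) * (-2)"
    by (simp add: cong_dvd_iff)
  moreover have "coprime q (-2)" "coprime q (det R)"
    using q R by (simp_all add: coprime_commute[of q])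
  ultimately have trace: "q dvd M$1$1 + M$2$2"
    by (simp add: coprime_dvd_mult_left_iff coprime_dvd_mult_right_iff)
  have cayley_hamilton: "(M ** M)$i$j - mat 1$i$j =
      M$i$j * (M$1$1 + M$2$2) - (if i = j then det M + 1 else 0)" for i j
  proof -
    have "i = 1 \<or> i = 2" "j = 1 \<or> j = 2" using exhaust_2 by auto
    then show ?thesis by (auto simp: matrix_mult_2_nth det_2 algebra_simps)
  qed
  have "q dvd (M ** M)$i$j - mat 1$i$j" for i j
    unfolding cayley_hamilton using trace D'(1) by (simp add: dvd_diff)
  then show ?thesis
    unfolding matcong_def cong_iff_dvd_diff by blast
qed

lemma reversible_mod_prime_power_iff:
  fixes p :: int
  assumes p: "prime p" and "r \<ge> 1" and "p \<noteq> 2 \<or> r = 1"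
  shows "reversible_mod M (p^r) \<longleftrightarrow>
           [det M = 1] (mod p^r) \<or> matcong (M ** M) (mat 1) (p^r)"
proof
  assume rev: "reversible_mod M (p^r)"
  show "[det M = 1] (mod p^r) \<or> matcong (M ** M) (mat 1) (p^r)"
  proof (cases "p = 2")
    case True
    then have "odd (det M)" "p^r = 2"
      using rev \<open>p \<noteq> 2 \<or> r = 1\<close> unfolding reversible_mod_iff by auto
    then show ?thesis
      by (simp add: cong_def odd_iff_mod_2_eq_one)
  next
    case False
    then have "coprime (p^r) 2"
      using p primes_coprime[OF p two_is_prime] by simp
    moreover obtain R where "coprime (det R) (p^r)" "matcong (M ** R ** M) R (p^r)"
      using rev unfolding reversible_mod_iff by blast
    ultimately show ?thesis
      using cong_1_or_minus_1_if_square_cong_1[OF p False reversible_mod_det_square_cong_1[OF rev]]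
        square_cong_1_if_reversible_det_cong_minus_1 by blast
  qed
qed (auto intro: reversible_mod_prime_power_if_det_cong_1[OF p] reversible_mod_if_square_cong_1)

theorem corollary4p16:
  fixes M :: "int^2^2" and n :: nat
  assumes "n > 0"
  shows "(\<not> 4 dvd n \<longrightarrow>
            (reversible_mod M (int n) \<longleftrightarrow>
              (\<forall>p\<in>prime_factors n.
                 [det M = 1] (mod int (p ^ multiplicity p n)) \<or>
                 matcong (M ** M) (mat 1) (int (p ^ multiplicity p n)))))
       \<and> (4 dvd n \<longrightarrow>
            (reversible_mod M (int n) \<longleftrightarrow>
              reversible_mod M (int (2 ^ multiplicity 2 n)) \<and>
              (\<forall>p\<in>prime_factors n. p \<noteq> 2 \<longrightarrow>
                 [det M = 1] (mod int (p ^ multiplicity p n)) \<or>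
                 matcong (M ** M) (mat 1) (int (p ^ multiplicity p n)))))"
proof -
  let ?rev = "\<lambda>p. reversible_mod M (int (p ^ multiplicity p n))"
  let ?cond = "\<lambda>p. [det M = 1] (mod int (p ^ multiplicity p n)) \<or>
      matcong (M ** M) (mat 1) (int (p ^ multiplicity p n))"
  have local: "?rev p \<longleftrightarrow> ?cond p"
    if "p \<in> prime_factors n" "p \<noteq> 2 \<or> multiplicity p n = 1" for p
    using that reversible_mod_prime_power_iff[of "int p" "multiplicity p n" M]
    by (auto simp: prime_factors_multiplicity)
  show ?thesis
    unfolding reversible_mod_iff_prime_powers[OF \<open>n > 0\<close>]
  proof (intro conjI impI)
    assume "\<not> 4 dvd n"
    then have "p \<noteq> 2 \<or> multiplicity p n = 1" if "p \<in> prime_factors n" for p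
      using that multiplicity_dvd'[of 2 2 n]
      by (cases "multiplicity 2 n \<ge> 2") (auto simp: prime_factors_multiplicity)
    then show "(\<forall>p\<in>prime_factors n. ?rev p) \<longleftrightarrow> (\<forall>p\<in>prime_factors n. ?cond p)"
      using local by (intro ball_cong refl) blast
  next
    assume "4 dvd n"
    then have "2 \<in> prime_factors n"
      using \<open>n > 0\<close> dvd_trans[of 2 4 n] by (simp add: in_prime_factors_iff)
    then have "(\<forall>p\<in>prime_factors n. ?rev p) \<longleftrightarrow>
        ?rev 2 \<and> (\<forall>p\<in>prime_factors n. p \<noteq> 2 \<longrightarrow> ?rev p)"
      by (metis (no_types, lifting))
    also have "\<dots> \<longleftrightarrow> ?rev 2 \<and> (\<forall>p\<in>prime_factors n. p \<noteq> 2 \<longrightarrow> ?cond p)"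
      using local by blast
    finally show "(\<forall>p\<in>prime_factors n. ?rev p) \<longleftrightarrow>
        ?rev 2 \<and> (\<forall>p\<in>prime_factors n. p \<noteq> 2 \<longrightarrow> ?cond p)" .
  qed
qed

end
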